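(* Let $r\ge 2$ and let $\pi$ be an $r$-homogeneous strongly log-concave distribution on $2^{[n]}$, and let $P_{\mathrm{BX},\pi}$ be the corresponding bases-exchange walk. Then the modified log-Sobolev constant satisfies $$\rho(P_{\mathrm{BX},\pi})\ge \frac{1}{r}.$$
   Context: A distribution $\pi:2^{[n]}\to\mathbb{R}_{\ge0}$ has generating polynomial $g_\pi(x)=\sum_{S\subseteq[n]}\pi(S)\prod_{i\in S}x_i$. It is $r$-homogeneous if $\pi(S)>0$ only when $|S|=r$. A polynomial $p$ with nonnegative coefficients is log-concave at $x\in\mathbb{R}^n_{\ge0}$ if the Hessian $\nabla^2\log p$ is negative semidefinite at $x$; it is strongly log-concave if for every index set $I\subseteq[n]$, $\partial_I p=\prod_{i\in I}\frac{\partial}{\partial x_i}p$ is log-concave at the all-ones vector. $\pi$ is strongly log-concave if $g_\pi$ is. Let $\Omega$ be the support of $\pi$ (its elements are called bases). The bases-exchange walk $P_{\mathrm{BX},\pi}$ on $\Omega$: from the current $B$, remove an element of $B$ chosen uniformly at random to get $S$, then move to a basis $B'\in\Omega$ with $B'\supset S$ with probability proportional to $\pi(B')$. For a reversible Markov chain $P$ on a finite set $\Omega$ with stationary distribution $\pi$, the Dirichlet form is $\mathcal{E}_P(f,g)=\sum_{x,y\in\Omega}\pi(x)f(x)[I-P](x,y)g(y)$, the entropy of $f:\Omega\to\mathbb{R}_{\ge0}$ is $\mathrm{Ent}_\pi(f)=\mathbb{E}_\pi(f\log f)-\mathbb{E}_\pi f\log\mathbb{E}_\pi f$ (with $0\log0=0$,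 natural log), and the modified log-Sobolev constant is $\rho(P)=\inf\{\mathcal{E}_P(f,\log f)/\mathrm{Ent}_\pi(f): f:\Omega\to\mathbb{R}_{\ge0},\ \mathrm{Ent}_\pi(f)\ne0\}$. *)

theory Defs
  imports "HOL-Analysis.Analysis"
begin

definition is_distribution :: "nat \<Rightarrow> (nat set \<Rightarrow> real) \<Rightarrow> bool" where
  "is_distribution n \<pi> \<longleftrightarrow>
     (\<forall>S. \<pi> S \<ge> 0) \<and> (\<forall>S. \<pi> S \<noteq> 0 \<longrightarrow> S \<subseteq> {..<n}) \<and>
     (\<Sum>S\<in>Pow {..<n}. \<pi> S) = 1"

definition homogeneous :: "nat \<Rightarrow> (nat set \<Rightarrow> real) \<Rightarrow> bool" where
  "homogeneous r \<pi> \<longleftrightarrow> (\<forall>S. \<pi> S > 0 \<longrightarrow> card S = r)"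

text \<open>Generating polynomial, as a function of x : nat => real (only coordinates in [n] matter).\<close>

definition gen_poly :: "nat \<Rightarrow> (nat set \<Rightarrow> real) \<Rightarrow> (nat \<Rightarrow> real) \<Rightarrow> real" where
  "gen_poly n \<pi> x = (\<Sum>S\<in>Pow {..<n}. \<pi> S * (\<Prod>i\<in>S. x i))"

definition pdiff :: "nat \<Rightarrow> ((nat \<Rightarrow> real) \<Rightarrow> real) \<Rightarrow> (nat \<Rightarrow> real) \<Rightarrow> real" where
  "pdiff i f x = deriv (\<lambda>t. f (x(i := t))) (x i)"

definition pdiff_set :: "nat set \<Rightarrow> ((nat \<Rightarrow> real) \<Rightarrow> real) \<Rightarrow> (nat \<Rightarrow> real) \<Rightarrow> real" where
  "pdiff_set I f = foldr pdiff (sorted_list_of_set I) f"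

text \<open>Log-concave at x: the Hessian of log p at x (as a form on R^n) is negative semidefinite.
  (With Isabelle's ln 0 = 0, the zero polynomial is log-concave, matching the usual convention.)\<close>

definition log_concave_at :: "nat \<Rightarrow> ((nat \<Rightarrow> real) \<Rightarrow> real) \<Rightarrow> (nat \<Rightarrow> real) \<Rightarrow> bool" where
  "log_concave_at n p x \<longleftrightarrow>
     (\<forall>v :: nat \<Rightarrow> real. (\<Sum>i<n. \<Sum>j<n. v i * pdiff i (pdiff j (\<lambda>y. ln (p y))) x * v j) \<le> 0)"

definition strongly_log_concave :: "nat \<Rightarrow> ((nat \<Rightarrow> real) \<Rightarrow> real) \<Rightarrow> bool" where
  "strongly_log_concave n p \<longleftrightarrow>
     (\<forall>I\<subseteq>{..<n}. log_concave_at n (pdiff_set I p) (\<lambda>_. 1))"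

definition support :: "(nat set \<Rightarrow> real) \<Rightarrow> nat set set" where
  "support \<pi> = {S. \<pi> S > 0}"

text \<open>Bases-exchange walk: remove a uniform element i of B, then move to B' \<supseteq> B - {i}
  in the support with probability proportional to \<pi> B'.\<close>

definition bx_walk :: "(nat set \<Rightarrow> real) \<Rightarrow> nat set \<Rightarrow> nat set \<Rightarrow> real" where
  "bx_walk \<pi> B B' =
     (\<Sum>i\<in>B. if B - {i} \<subseteq> B' \<and> B' \<in> support \<pi>
              then \<pi> B' / (\<Sum>C\<in>{C\<in>support \<pi>. B - {i} \<subseteq> C}. \<pi> C) else 0) / real (card B)"

definition dirichlet_form ::
  "'a set \<Rightarrow> ('a \<Rightarrow> real) \<Rightarrow> ('a \<Rightarrow> 'a \<Rightarrow> real) \<Rightarrow> ('a \<Rightarrow> real) \<Rightarrow> ('a \<Rightarrow> real) \<Rightarrow> real"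
  where "dirichlet_form \<Omega> \<pi> P f g =
    (\<Sum>x\<in>\<Omega>. \<Sum>y\<in>\<Omega>. \<pi> x * f x * ((if x = y then 1 else 0) - P x y) * g y)"

definition entropy :: "'a set \<Rightarrow> ('a \<Rightarrow> real) \<Rightarrow> ('a \<Rightarrow> real) \<Rightarrow> real" where
  "entropy \<Omega> \<pi> f =
    (\<Sum>x\<in>\<Omega>. \<pi> x * (f x * ln (f x))) - (\<Sum>x\<in>\<Omega>. \<pi> x * f x) * ln (\<Sum>x\<in>\<Omega>. \<pi> x * f x)"

text \<open>Infimum taken in the extended reals (inf of the empty set is +\<infinity>); test functions are
  taken strictly positive on \<Omega>.\<close>

definition mlsi_const :: "'a set \<Rightarrow> ('a \<Rightarrow> real) \<Rightarrow> ('a \<Rightarrow> 'a \<Rightarrow> real) \<Rightarrow> ereal" where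
  "mlsi_const \<Omega> \<pi> P =
    (INF f\<in>{f. (\<forall>x\<in>\<Omega>. f x > 0) \<and> entropy \<Omega> \<pi> f \<noteq> 0}.
       ereal (dirichlet_form \<Omega> \<pi> P f (\<lambda>x. ln (f x)) / entropy \<Omega> \<pi> f))"

end

theory Submission
  imports Defs
begin

(* Local-to-global entropy contraction, after Cryan, Guo and Mousa. For a set J let F J be the
   pi-average of f over the bases containing J, and let level j I sum marginal J * F J * ln (F J)
   over the sets J above I with j more elements. Then Ent f = level r {} - level 0 {}, and
   Jensen's inequality on each down-up step of the bases-exchange walk gives
   E (f, ln f) >= level r {} - level (r - 1) {} / r.
   Strong log-concavity makes the Hessian of ln (d_I g) at the all-ones vector negative
   semidefinite, which bounds the second eigenvalue of the walk on the link of I. Through the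
   log-sum inequality this yields an inequality between levels 0, 1 and 2 of every link, and
   two inductions on the codimension lift it to level (r - 1) {} <= (r - 1) level r {} + level 0 {},
   which is exactly Ent f <= r E (f, ln f). *)

section \<open>Elementary inequalities\<close>

lemma ln_tangent_lower_bound:
  fixes a b K :: real
  assumes "a \<ge> 0" "b \<ge> 0" "a > 0 \<Longrightarrow> b > 0" "K > 0"
  shows "a * ln K + a - b * K \<le> a * ln (a / b)"
proof (cases "a = 0")
  case True
  then show ?thesis using assms by simp
next
  case False
  then have a: "a > 0" and b: "b > 0" using assms by auto
  have "ln (b * K / a) \<le> b * K / a - 1"
    using a b assms(4) by (intro ln_le_minus_one) simp
  moreover have "ln (b * K / a) = ln K - ln (a / b)"
    using a b assms(4) by (simp add: ln_div ln_mult)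
  ultimately have "a * (ln K - ln (a / b)) \<le> a * (b * K / a - 1)"
    using a by (intro mult_left_mono) auto
  then show ?thesis using a by (simp add: algebra_simps)
qed

lemma log_sum_inequality:
  fixes a b :: "'i \<Rightarrow> real"
  assumes "finite A"
    and nonneg: "\<And>i. i \<in> A \<Longrightarrow> a i \<ge> 0" "\<And>i. i \<in> A \<Longrightarrow> b i \<ge> 0"
    and pos: "\<And>i. i \<in> A \<Longrightarrow> a i > 0 \<Longrightarrow> b i > 0"
    and bound: "sum b A \<le> B" "B > 0"
  shows "sum a A * ln (sum a A / B) \<le> (\<Sum>i\<in>A. a i * ln (a i / b i))"
proof (cases "sum a A = 0")
  case True
  then have "\<forall>i\<in>A. a i = 0" using sum_nonneg_eq_0_iff[OF assms(1)] nonneg(1) by blast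
  then show ?thesis using True by simp
next
  case False
  define K where "K = sum a A / B"
  have K: "K > 0"
    unfolding K_def using False bound(2) sum_nonneg[of A a] nonneg(1) by (simp add: less_eq_real_def)
  have "sum a A * ln K = sum a A * ln K + sum a A - K * B"
    unfolding K_def using bound(2) by simp
  also have "\<dots> \<le> sum a A * ln K + sum a A - K * sum b A"
    using K bound(1) by (simp add: mult_left_mono)
  also have "\<dots> = (\<Sum>i\<in>A. a i * ln K + a i - b i * K)"
    by (simp add: sum.distrib sum_subtractf sum_distrib_left sum_distrib_right mult.commute)
  also have "\<dots> \<le> (\<Sum>i\<in>A. a i * ln (a i / b i))"
    using nonneg pos K by (intro sum_mono ln_tangent_lower_bound) auto
  finally show ?thesis unfolding K_def .
qed

lemma quadratic_form_le_of_row_sums: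
  fixes H :: "'i \<Rightarrow> 'i \<Rightarrow> real" and s :: "'i \<Rightarrow> real"
  assumes dominated: "\<And>v. (\<Sum>i\<in>A. \<Sum>j\<in>A. v i * H i j * v j) \<le> (\<Sum>i\<in>A. s i * v i)^2 / G"
    and G: "G > 0" and sym: "\<And>i j. H i j = H j i"
    and row: "\<And>i. i \<in> A \<Longrightarrow> (\<Sum>j\<in>A. H i j) = c * s i"
    and total: "(\<Sum>i\<in>A. s i) = m * G" and m: "m > 0"
  shows "(\<Sum>i\<in>A. \<Sum>j\<in>A. v i * H i j * v j) \<le> c * (\<Sum>i\<in>A. s i * v i)^2 / (m * G)"
proof -
  \<comment> \<open>Write \<open>v = t + z\<close> with \<open>s \<bullet> z = 0\<close>: the cross terms vanish since \<open>H\<close> maps the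
    constant vector to \<open>c s\<close>, and the form at \<open>z\<close> is nonpositive by domination.\<close>
  define t where "t = (\<Sum>i\<in>A. s i * v i) / (m * G)"
  define z where "z i = v i - t" for i
  have sz: "(\<Sum>i\<in>A. s i * z i) = 0"
  proof -
    have "(\<Sum>i\<in>A. s i * z i) = (\<Sum>i\<in>A. s i * v i) - t * (\<Sum>i\<in>A. s i)"
      unfolding z_def by (simp add: algebra_simps sum_subtractf sum_distrib_left)
    also have "\<dots> = 0" unfolding total t_def using G m by simp
    finally show ?thesis .
  qed
  have cross: "(\<Sum>i\<in>A. \<Sum>j\<in>A. z i * H i j) = 0"
  proof -
    have "(\<Sum>i\<in>A. \<Sum>j\<in>A. z i * H i j) = c * (\<Sum>i\<in>A. s i * z i)"
      using row by (simp add: sum_distrib_left[symmetric] algebra_simps)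
    then show ?thesis using sz by simp
  qed
  have cross': "(\<Sum>i\<in>A. \<Sum>j\<in>A. H i j * z j) = 0"
    using cross by (subst sum.swap) (simp add: sym mult.commute)
  have "v i * H i j * v j = t * t * H i j + t * (H i j * z j) + t * (z i * H i j) + z i * H i j * z j"
    for i j
    unfolding z_def by (simp add: algebra_simps)
  then have "(\<Sum>i\<in>A. \<Sum>j\<in>A. v i * H i j * v j) = t * t * (\<Sum>i\<in>A. \<Sum>j\<in>A. H i j)
      + t * (\<Sum>i\<in>A. \<Sum>j\<in>A. H i j * z j) + t * (\<Sum>i\<in>A. \<Sum>j\<in>A. z i * H i j)
      + (\<Sum>i\<in>A. \<Sum>j\<in>A. z i * H i j * z j)"
    by (simp add: sum.distrib sum_distrib_left)
  also have "\<dots> = t * t * (\<Sum>i\<in>A. \<Sum>j\<in>A. H i j) + (\<Sum>i\<in>A. \<Sum>j\<in>A. z i * H i j * z j)"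
    using cross cross' by simp
  also have "\<dots> \<le> t * t * (c * (m * G))"
    using dominated[of z] row by (simp add: sz sum_distrib_left[symmetric] total)
  also have "\<dots> = c * (\<Sum>i\<in>A. s i * v i)^2 / (m * G)"
    unfolding t_def using G m by (simp add: power2_eq_square field_simps)
  finally show ?thesis .
qed

section \<open>Layers of the Boolean lattice\<close>

lemma sum_offdiag_swap:
  assumes "finite R"
  shows "(\<Sum>x\<in>R. \<Sum>y\<in>R - {x}. g x y) = (\<Sum>y\<in>R. \<Sum>x\<in>R - {y}. g x y)"
proof -
  have "(\<Sum>x\<in>R. \<Sum>y\<in>R - {x}. g x y) = (\<Sum>x\<in>R. \<Sum>y\<in>{y\<in>R. x \<noteq> y}. g x y)"
    by (intro sum.cong) auto
  also have "\<dots> = (\<Sum>y\<in>R. \<Sum>x\<in>{x\<in>R. x \<noteq> y}. g x y)"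
    by (rule sum.swap_restrict) (simp_all add: assms)
  also have "\<dots> = (\<Sum>y\<in>R. \<Sum>x\<in>R - {y}. g x y)"
    by (intro sum.cong) auto
  finally show ?thesis .
qed

definition layer :: "nat \<Rightarrow> nat \<Rightarrow> nat set \<Rightarrow> nat set set" where
  "layer n j I = {J \<in> Pow {..<n}. I \<subseteq> J \<and> card J = card I + j}"

lemma finite_layer [simp]: "finite (layer n j I)"
  unfolding layer_def by simp

lemma layer_0:
  assumes "J \<subseteq> {..<n}"
  shows "layer n 0 J = {J}"
proof -
  have "K = J" if "K \<subseteq> {..<n}" "J \<subseteq> K" "card K = card J" for K
    using card_subset_eq[of K J] that finite_subset[OF that(1)] by auto
  then show ?thesis using assms unfolding layer_def by auto
qed

text \<open>Each \<open>J\<close> in layer \<open>j + 1\<close> above \<open>I\<close> is reached from exactly \<open>j + 1\<close> of the sets \<open>I + x\<close>.\<close>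

lemma sum_layer_insert:
  assumes "I \<subseteq> {..<n}"
  shows "(\<Sum>x\<in>{..<n} - I. \<Sum>J\<in>layer n j (insert x I). g J) = real (Suc j) * (\<Sum>J\<in>layer n (Suc j) I. g J)"
proof -
  have finI: "finite I" using assms finite_subset by blast
  have "(\<Sum>x\<in>{..<n} - I. \<Sum>J\<in>layer n j (insert x I). g J)
      = (\<Sum>x\<in>{..<n} - I. \<Sum>J\<in>{J\<in>layer n (Suc j) I. x \<in> J}. g J)"
  proof (rule sum.cong[OF refl])
    fix x assume "x \<in> {..<n} - I"
    then have "layer n j (insert x I) = {J \<in> layer n (Suc j) I. x \<in> J}"
      using finI by (auto simp: layer_def)
    then show "(\<Sum>J\<in>layer n j (insert x I). g J) = (\<Sum>J\<in>{J \<in> layer n (Suc j) I. x \<in> J}. g J)"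
      by simp
  qed
  also have "\<dots> = (\<Sum>J\<in>layer n (Suc j) I. \<Sum>x\<in>{x\<in>{..<n} - I. x \<in> J}. g J)"
    by (rule sum.swap_restrict) auto
  also have "\<dots> = (\<Sum>J\<in>layer n (Suc j) I. real (Suc j) * g J)"
  proof (rule sum.cong[OF refl])
    fix J assume J: "J \<in> layer n (Suc j) I"
    then have "{x\<in>{..<n} - I. x \<in> J} = J - I" unfolding layer_def by auto
    moreover have "card (J - I) = Suc j" using J finI by (simp add: layer_def card_Diff_subset)
    ultimately show "(\<Sum>x\<in>{x\<in>{..<n} - I. x \<in> J}. g J) = real (Suc j) * g J" by simp
  qed
  finally show ?thesis by (simp add: sum_distrib_left)
qed

lemma layer_facets:
  assumes "S \<subseteq> {..<n}" "S \<noteq> {}"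
  shows "{T \<in> layer n (card S - 1) {}. T \<subseteq> S} = (\<lambda>i. S - {i}) ` S"
proof
  have finS: "finite S" using assms(1) finite_subset by blast
  show "(\<lambda>i. S - {i}) ` S \<subseteq> {T \<in> layer n (card S - 1) {}. T \<subseteq> S}"
    using assms finS unfolding layer_def by auto
  show "{T \<in> layer n (card S - 1) {}. T \<subseteq> S} \<subseteq> (\<lambda>i. S - {i}) ` S"
  proof
    fix T assume T: "T \<in> {T \<in> layer n (card S - 1) {}. T \<subseteq> S}"
    then have TS: "T \<subseteq> S" and cT: "card T = card S - 1" unfolding layer_def by auto
    have "card T < card S" using cT assms(2) finS by (simp add: card_gt_0_iff)
    then obtain i where i: "i \<in> S" "i \<notin> T"
      using card_mono[OF finite_subset[OF TS finS]] by (metis leD subsetI)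
    moreover have "card (S - {i}) = card T" using cT i finS by simp
    ultimately have "T = S - {i}"
      using TS card_subset_eq[of "S - {i}" T] finS by auto
    then show "T \<in> (\<lambda>i. S - {i}) ` S" using i by blast
  qed
qed

section \<open>Homogeneous distributions and their marginals\<close>

locale homogeneous_distribution =
  fixes n r :: nat and \<pi> :: "nat set \<Rightarrow> real"
  assumes distribution: "is_distribution n \<pi>"
    and homogeneous: "homogeneous r \<pi>"
begin

definition supersets :: "nat set \<Rightarrow> nat set set" where
  "supersets J = {S \<in> Pow {..<n}. J \<subseteq> S}"

definition marginal :: "nat set \<Rightarrow> real" where
  "marginal J = (\<Sum>S\<in>supersets J. \<pi> S)"

lemma finite_supersets [simp]: "finite (supersets J)"
  unfolding supersets_def by simp

lemma pi_nonneg: "\<pi> S \<ge> 0"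
  using distribution unfolding is_distribution_def by auto

lemma pi_pos_iff: "\<pi> S > 0 \<longleftrightarrow> \<pi> S \<noteq> 0"
  using pi_nonneg[of S] by linarith

lemma subset_if_pi_nonzero: "\<pi> S \<noteq> 0 \<Longrightarrow> S \<subseteq> {..<n}"
  using distribution unfolding is_distribution_def by auto

lemma card_if_pi_nonzero: "\<pi> S \<noteq> 0 \<Longrightarrow> card S = r"
  using homogeneous pi_pos_iff unfolding homogeneous_def by auto

lemma support_subset: "support \<pi> \<subseteq> Pow {..<n}"
  unfolding support_def using subset_if_pi_nonzero by (auto dest: less_imp_neq[symmetric])

lemma card_support: "S \<in> support \<pi> \<Longrightarrow> card S = r"
  using card_if_pi_nonzero by (auto simp: support_def)

lemma finite_support [simp]: "finite (support \<pi>)"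
  using support_subset finite_subset by blast

lemma sum_support_supersets:
  "(\<Sum>S\<in>{S\<in>support \<pi>. J \<subseteq> S}. \<pi> S * g S) = (\<Sum>S\<in>supersets J. \<pi> S * g S)"
  by (rule sum.mono_neutral_left)
    (use support_subset in \<open>auto simp: supersets_def support_def pi_pos_iff\<close>)

lemma marginal_nonneg: "marginal J \<ge> 0"
  unfolding marginal_def by (intro sum_nonneg) (simp add: pi_nonneg)

lemma marginal_antimono: "I \<subseteq> J \<Longrightarrow> marginal J \<le> marginal I"
  unfolding marginal_def by (intro sum_mono2) (auto simp: supersets_def pi_nonneg)

lemma marginal_empty: "marginal {} = 1"
  using distribution unfolding is_distribution_def marginal_def supersets_def by (simp add: Pow_def)

lemma marginal_eq_0_if_card_gt:
  assumes "finite J" "card J > r"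
  shows "marginal J = 0"
proof -
  have "\<pi> S = 0" if "S \<in> supersets J" for S
  proof (rule ccontr)
    assume "\<pi> S \<noteq> 0"
    then have "card J \<le> card S"
      using that subset_if_pi_nonzero by (auto simp: supersets_def intro!: card_mono dest: finite_subset)
    then show False using assms card_if_pi_nonzero[OF \<open>\<pi> S \<noteq> 0\<close>] by simp
  qed
  then show ?thesis unfolding marginal_def by simp
qed

lemma marginal_pos_if_support: "S \<in> support \<pi> \<Longrightarrow> J \<subseteq> S \<Longrightarrow> marginal J > 0"
proof -
  assume S: "S \<in> support \<pi>" "J \<subseteq> S"
  then have "\<pi> S \<le> marginal J"
    unfolding marginal_def using support_subset
    by (intro member_le_sum) (auto simp: supersets_def pi_nonneg)
  then show ?thesis using S by (simp add: support_def)
qed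

text \<open>Double counting: a basis above \<open>I\<close> contains exactly \<open>r - |I|\<close> further elements.\<close>

lemma sum_supersets_insert:
  assumes "I \<subseteq> {..<n}"
  shows "(\<Sum>x\<in>{..<n} - I. \<Sum>S\<in>supersets (insert x I). \<pi> S * g S)
    = real (r - card I) * (\<Sum>S\<in>supersets I. \<pi> S * g S)"
proof -
  have finI: "finite I" using assms finite_subset by blast
  have "(\<Sum>x\<in>{..<n} - I. \<Sum>S\<in>supersets (insert x I). \<pi> S * g S)
      = (\<Sum>x\<in>{..<n} - I. \<Sum>S\<in>{S\<in>supersets I. x \<in> S}. \<pi> S * g S)"
    by (intro sum.cong refl) (auto simp: supersets_def)
  also have "\<dots> = (\<Sum>S\<in>supersets I. \<Sum>x\<in>{x\<in>{..<n} - I. x \<in> S}. \<pi> S * g S)"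
    by (rule sum.swap_restrict) auto
  also have "\<dots> = (\<Sum>S\<in>supersets I. real (r - card I) * (\<pi> S * g S))"
  proof (rule sum.cong[OF refl])
    fix S assume S: "S \<in> supersets I"
    show "(\<Sum>x\<in>{x\<in>{..<n} - I. x \<in> S}. \<pi> S * g S) = real (r - card I) * (\<pi> S * g S)"
    proof (cases "\<pi> S = 0")
      case False
      have "{x\<in>{..<n} - I. x \<in> S} = S - I" using S by (auto simp: supersets_def)
      moreover have "card (S - I) = r - card I"
        using card_if_pi_nonzero[OF False] S finI by (simp add: supersets_def card_Diff_subset)
      ultimately show ?thesis by simp
    qed simp
  qed
  finally show ?thesis by (simp add: sum_distrib_left)
qed

lemma sum_marginal_insert:
  "I \<subseteq> {..<n} \<Longrightarrow> (\<Sum>x\<in>{..<n} - I. marginal (insert x I)) = real (r - card I) * marginal I"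
  using sum_supersets_insert[of I "\<lambda>_. 1"] unfolding marginal_def by simp

end

section \<open>The Hessian of the generating polynomial\<close>

lemma prod_diff_fun_upd:
  fixes x :: "'a \<Rightarrow> 'b::comm_ring_1"
  assumes "finite S"
  shows "(\<Prod>k\<in>S - J. (x(i := t)) k)
    = (\<Prod>k\<in>S - J. x k) + (t - x i) * (if i \<in> S \<and> i \<notin> J then \<Prod>k\<in>S - insert i J. x k else 0)"
proof (cases "i \<in> S \<and> i \<notin> J")
  case True
  then have i: "i \<in> S - J" by simp
  have split: "(\<Prod>k\<in>S - J. y k) = y i * (\<Prod>k\<in>S - insert i J. y k)" for y :: "'a \<Rightarrow> 'b"
    using prod.remove[OF _ i, of y] assms by (simp add: Diff_insert[symmetric])
  have "(\<Prod>k\<in>S - insert i J. (x(i := t)) k) = (\<Prod>k\<in>S - insert i J. x k)"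
    by (intro prod.cong) auto
  then show ?thesis using True split[of x] split[of "x(i := t)"] by (simp add: algebra_simps)
next
  case False
  then have "(\<Prod>k\<in>S - J. (x(i := t)) k) = (\<Prod>k\<in>S - J. x k)"
    by (intro prod.cong) auto
  then show ?thesis using False by auto
qed

context homogeneous_distribution
begin

text \<open>\<open>link_poly J\<close> is \<open>\<partial>\<^sub>J g\<^sub>\<pi>\<close>, the generating polynomial of the link of \<open>J\<close>.\<close>

definition link_poly :: "nat set \<Rightarrow> (nat \<Rightarrow> real) \<Rightarrow> real" where
  "link_poly J x = (\<Sum>S\<in>supersets J. \<pi> S * (\<Prod>i\<in>S - J. x i))"

lemma link_poly_empty: "link_poly {} = gen_poly n \<pi>"
  unfolding gen_poly_def link_poly_def supersets_def by (auto simp: fun_eq_iff Pow_def)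

lemma link_poly_one: "link_poly J (\<lambda>_. 1) = marginal J"
  unfolding link_poly_def marginal_def by simp

lemma link_poly_fun_upd:
  "link_poly J (x(i := t)) = link_poly J x + (t - x i) * (if i \<in> J then 0 else link_poly (insert i J) x)"
proof -
  have "link_poly J (x(i := t)) = link_poly J x
      + (t - x i) * (\<Sum>S\<in>supersets J. if i \<in> S \<and> i \<notin> J then \<pi> S * (\<Prod>k\<in>S - insert i J. x k) else 0)"
    unfolding link_poly_def sum_distrib_left sum.distrib[symmetric]
  proof (rule sum.cong[OF refl])
    fix S assume "S \<in> supersets J"
    then have "finite S" by (auto simp: supersets_def dest: finite_subset)
    then show "\<pi> S * (\<Prod>k\<in>S - J. (x(i := t)) k) = \<pi> S * (\<Prod>k\<in>S - J. x k)
        + (t - x i) * (if i \<in> S \<and> i \<notin> J then \<pi> S * (\<Prod>k\<in>S - insert i J. x k) else 0)"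
      unfolding prod_diff_fun_upd[OF \<open>finite S\<close>] by (simp add: algebra_simps)
  qed
  also have "(\<Sum>S\<in>supersets J. if i \<in> S \<and> i \<notin> J then \<pi> S * (\<Prod>k\<in>S - insert i J. x k) else 0)
      = (if i \<in> J then 0 else link_poly (insert i J) x)"
  proof (cases "i \<in> J")
    case False
    have "{S \<in> supersets J. i \<in> S} = supersets (insert i J)" by (auto simp: supersets_def)
    then show ?thesis using False by (simp add: sum.inter_filter[symmetric] link_poly_def)
  qed simp
  finally show ?thesis .
qed

lemma pdiff_link_poly: "pdiff i (link_poly J) = (\<lambda>x. if i \<in> J then 0 else link_poly (insert i J) x)"
proof
  fix x
  have "pdiff i (link_poly J) x
      = deriv (\<lambda>t. link_poly J x + (t - x i) * (if i \<in> J then 0 else link_poly (insert i J) x)) (x i)"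
    unfolding pdiff_def link_poly_fun_upd ..
  also have "\<dots> = (if i \<in> J then 0 else link_poly (insert i J) x)"
    by (rule DERIV_imp_deriv) (auto intro!: derivative_eq_intros)
  finally show "pdiff i (link_poly J) x = (if i \<in> J then 0 else link_poly (insert i J) x)" .
qed

lemma pdiff_set_gen_poly:
  assumes "finite I"
  shows "pdiff_set I (gen_poly n \<pi>) = link_poly I"
proof -
  have "distinct xs \<Longrightarrow> foldr pdiff xs (link_poly {}) = link_poly (set xs)" for xs
    by (induction xs) (simp_all add: pdiff_link_poly)
  then show ?thesis
    unfolding pdiff_set_def link_poly_empty[symmetric] using assms by simp
qed

lemma pdiff_ln_link_poly:
  assumes "link_poly J y > 0"
  shows "pdiff j (\<lambda>y. ln (link_poly J y)) y = (if j \<in> J then 0 else link_poly (insert j J) y) / link_poly J y"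
proof -
  have "pdiff j (\<lambda>y. ln (link_poly J y)) y
      = deriv (\<lambda>t. ln (link_poly J y + (t - y j) * (if j \<in> J then 0 else link_poly (insert j J) y))) (y j)"
    unfolding pdiff_def link_poly_fun_upd ..
  also have "\<dots> = (if j \<in> J then 0 else link_poly (insert j J) y) / link_poly J y"
    by (rule DERIV_imp_deriv) (use assms in \<open>auto intro!: derivative_eq_intros\<close>)
  finally show ?thesis .
qed

lemma hessian_ln_link_poly:
  assumes pos: "marginal I > 0"
  shows "pdiff i (pdiff j (\<lambda>y. ln (link_poly I y))) (\<lambda>_. 1) =
    ((if i \<in> I \<or> j \<in> I \<or> i = j then 0 else marginal (insert i (insert j I))) * marginal I
      - (if j \<in> I then 0 else marginal (insert j I)) * (if i \<in> I then 0 else marginal (insert i I)))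
    / marginal I ^ 2"
proof -
  define one :: "nat \<Rightarrow> real" where "one = (\<lambda>_. 1)"
  define a where "a = (if j \<in> I then 0 else marginal (insert j I))"
  define b where "b = (if i \<in> I \<or> j \<in> I \<or> i = j then 0 else marginal (insert i (insert j I)))"
  define d where "d = (if i \<in> I then 0 else marginal (insert i I))"
  have d: "0 \<le> d" "d \<le> marginal I"
    unfolding d_def by (auto intro: marginal_antimono marginal_nonneg)
  have line: "link_poly I (one(i := t)) = marginal I + (t - 1) * d" for t
    unfolding link_poly_fun_upd d_def by (simp add: one_def link_poly_one)
  have line': "(if j \<in> I then 0 else link_poly (insert j I) (one(i := t))) = a + (t - 1) * b" for t
    unfolding link_poly_fun_upd a_def b_def by (simp add: one_def link_poly_one)
  have "\<forall>\<^sub>F t in nhds (1::real). t \<in> {0<..}"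
    by (rule eventually_nhds_in_open) (simp_all add: open_greaterThan)
  then have "\<forall>\<^sub>F t in nhds 1. pdiff j (\<lambda>y. ln (link_poly I y)) (one(i := t))
      = (a + (t - 1) * b) / (marginal I + (t - 1) * d)"
  proof (rule eventually_mono)
    fix t :: real assume "t \<in> {0<..}"
    then have "(marginal I - d) + t * d > 0"
      using pos d by (cases "d = 0") (simp_all add: add_nonneg_pos)
    then have "marginal I + (t - 1) * d > 0" by (simp add: algebra_simps)
    then show "pdiff j (\<lambda>y. ln (link_poly I y)) (one(i := t)) = (a + (t - 1) * b) / (marginal I + (t - 1) * d)"
      using pdiff_ln_link_poly[of I "one(i := t)" j] unfolding line line' by simp
  qed
  then have "pdiff i (pdiff j (\<lambda>y. ln (link_poly I y))) one
      = deriv (\<lambda>t. (a + (t - 1) * b) / (marginal I + (t - 1) * d)) 1"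
    unfolding pdiff_def[of i] by (simp add: one_def deriv_cong_ev)
  also have "\<dots> = (b * marginal I - a * d) / marginal I ^ 2"
    by (rule DERIV_imp_deriv)
      (use pos in \<open>auto intro!: derivative_eq_intros simp: power2_eq_square algebra_simps\<close>)
  finally show ?thesis unfolding a_def b_def d_def one_def .
qed

lemma link_hessian_form_le:
  assumes slc: "strongly_log_concave n (gen_poly n \<pi>)"
    and I: "I \<subseteq> {..<n}" and pos: "marginal I > 0"
  shows "(\<Sum>i<n. \<Sum>j<n. v i * (if i \<in> I \<or> j \<in> I \<or> i = j then 0 else marginal (insert i (insert j I))) * v j)
    \<le> (\<Sum>i<n. (if i \<in> I then 0 else marginal (insert i I)) * v i)^2 / marginal I"
proof -
  define G where "G = marginal I"
  define H where "H i j = (if i \<in> I \<or> j \<in> I \<or> i = j then 0 else marginal (insert i (insert j I)))"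
    for i j
  define s where "s i = (if i \<in> I then 0 else marginal (insert i I))" for i
  have G: "G > 0" unfolding G_def by (rule pos)
  have "log_concave_at n (pdiff_set I (gen_poly n \<pi>)) (\<lambda>_. 1)"
    using slc I unfolding strongly_log_concave_def by blast
  then have "log_concave_at n (link_poly I) (\<lambda>_. 1)"
    using pdiff_set_gen_poly[OF finite_subset[OF I]] by simp
  then have "(\<Sum>i<n. \<Sum>j<n. v i * ((H i j * G - s j * s i) / G^2) * v j) \<le> 0"
    unfolding log_concave_at_def hessian_ln_link_poly[OF pos] H_def s_def G_def by blast
  moreover have "v i * ((H i j * G - s j * s i) / G^2) * v j
      = (v i * H i j * v j) / G - ((s i * v i) * (s j * v j)) / G^2" for i j
    using G by (simp add: field_simps power2_eq_square)
  then have "(\<Sum>i<n. \<Sum>j<n. v i * ((H i j * G - s j * s i) / G^2) * v j)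
      = (\<Sum>i<n. \<Sum>j<n. v i * H i j * v j) / G - (\<Sum>i<n. s i * v i)^2 / G^2"
    by (simp add: sum_subtractf sum_divide_distrib power2_eq_square sum_product)
  ultimately have "(\<Sum>i<n. \<Sum>j<n. v i * H i j * v j) / G \<le> (\<Sum>i<n. s i * v i)^2 / G^2"
    by linarith
  then have "G * ((\<Sum>i<n. \<Sum>j<n. v i * H i j * v j) / G) \<le> G * ((\<Sum>i<n. s i * v i)^2 / G^2)"
    using G by (intro mult_left_mono) auto
  then show ?thesis using G unfolding H_def s_def G_def by (simp add: power2_eq_square)
qed

text \<open>Log-concavity of \<open>\<partial>\<^sub>I g\<^sub>\<pi>\<close> at the all-ones vector bounds the second eigenvalue of the
  random walk on the link of \<open>I\<close>; in quadratic-form language:\<close>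

lemma link_quadratic_form_le:
  assumes slc: "strongly_log_concave n (gen_poly n \<pi>)"
    and I: "I \<subseteq> {..<n}" and pos: "marginal I > 0" and codim: "card I + 2 \<le> r"
  shows "(\<Sum>x\<in>{..<n} - I. \<Sum>y\<in>{..<n} - I - {x}. marginal (insert y (insert x I)) * u x * u y)
    \<le> (real (r - card I) - 1) / (real (r - card I) * marginal I)
       * (\<Sum>x\<in>{..<n} - I. marginal (insert x I) * u x)^2"
proof -
  define m where "m = real (r - card I)"
  define G where "G = marginal I"
  define H where "H i j = (if i \<in> I \<or> j \<in> I \<or> i = j then 0 else marginal (insert i (insert j I)))"
    for i j
  define s where "s i = (if i \<in> I then 0 else marginal (insert i I))" for i
  have G: "G > 0" unfolding G_def by (rule pos)
  have m: "m \<ge> 2" using codim unfolding m_def by linarith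
  have dominated: "(\<Sum>i<n. \<Sum>j<n. v i * H i j * v j) \<le> (\<Sum>i<n. s i * v i)^2 / G" for v
    using link_hessian_form_le[OF slc I pos] unfolding H_def s_def G_def .
  have sum_s: "(\<Sum>i<n. s i * u i) = (\<Sum>x\<in>{..<n} - I. marginal (insert x I) * u x)" for u
    by (rule sum.mono_neutral_cong_right) (auto simp: s_def)
  have row: "(\<Sum>j<n. H i j) = (m - 1) * s i" if "i < n" for i
  proof (cases "i \<in> I")
    case False
    then have i: "i \<in> {..<n} - I" using that by simp
    have "(\<Sum>j<n. H i j) = (\<Sum>j\<in>{..<n} - insert i I. marginal (insert j (insert i I)))"
      using False by (intro sum.mono_neutral_cong_right) (auto simp: H_def insert_commute)
    also have "\<dots> = real (r - card (insert i I)) * marginal (insert i I)"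
      using I i by (intro sum_marginal_insert) auto
    also have "\<dots> = (m - 1) * s i"
      using False I codim finite_subset[OF I] unfolding m_def s_def by (simp add: of_nat_diff)
    finally show ?thesis .
  qed (simp add: H_def s_def)
  have total: "(\<Sum>i<n. s i) = m * G"
    using sum_s[of "\<lambda>_. 1"] sum_marginal_insert[OF I] unfolding m_def G_def by simp
  have "(\<Sum>i<n. \<Sum>j<n. u i * H i j * u j) \<le> (m - 1) * (\<Sum>i<n. s i * u i)^2 / (m * G)"
    using m G by (intro quadratic_form_le_of_row_sums[OF dominated G _ row total]) (auto simp: H_def insert_commute)
  moreover have "(\<Sum>i<n. \<Sum>j<n. u i * H i j * u j)
      = (\<Sum>x\<in>{..<n} - I. \<Sum>y\<in>{..<n} - I - {x}. marginal (insert y (insert x I)) * u x * u y)"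
  proof (rule sum.mono_neutral_cong_right)
    show "(\<Sum>j<n. u x * H x j * u j) = (\<Sum>y\<in>{..<n} - I - {x}. marginal (insert y (insert x I)) * u x * u y)"
      if "x \<in> {..<n} - I" for x
      using that by (intro sum.mono_neutral_cong_right) (auto simp: H_def insert_commute)
  qed (auto simp: H_def)
  ultimately show ?thesis unfolding sum_s m_def G_def by simp
qed

end

section \<open>Entropy along the layers\<close>

locale test_function = homogeneous_distribution +
  fixes f :: "nat set \<Rightarrow> real"
  assumes f_pos: "\<pi> S > 0 \<Longrightarrow> f S > 0"
begin

definition mass :: "nat set \<Rightarrow> real" where
  "mass J = (\<Sum>S\<in>supersets J. \<pi> S * f S)"

definition cond_mean :: "nat set \<Rightarrow> real" where
  "cond_mean J = mass J / marginal J"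

definition ent_term :: "nat set \<Rightarrow> real" where
  "ent_term J = mass J * ln (cond_mean J)"

definition level :: "nat \<Rightarrow> nat set \<Rightarrow> real" where
  "level j I = (\<Sum>J\<in>layer n j I. ent_term J)"

lemma pi_mult_f_nonneg: "\<pi> S * f S \<ge> 0"
  using f_pos[of S] pi_nonneg[of S] pi_pos_iff[of S] by (cases "\<pi> S = 0") auto

lemma mass_nonneg: "mass J \<ge> 0"
  unfolding mass_def by (intro sum_nonneg pi_mult_f_nonneg)

lemma mass_eq_0_if_marginal_eq_0: "marginal J = 0 \<Longrightarrow> mass J = 0"
  unfolding marginal_def mass_def using pi_nonneg by (simp add: sum_nonneg_eq_0_iff)

lemma mass_pos_if_marginal_pos:
  assumes "marginal J > 0"
  shows "mass J > 0"
proof -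
  obtain S where S: "S \<in> supersets J" "\<pi> S \<noteq> 0"
    using assms unfolding marginal_def by (metis less_irrefl sum.neutral)
  then have "\<pi> S * f S > 0" using f_pos pi_pos_iff by auto
  also have "\<pi> S * f S \<le> mass J"
    unfolding mass_def using S(1) by (rule member_le_sum) (auto intro: pi_mult_f_nonneg)
  finally show ?thesis .
qed

lemma marginal_mult_cond_mean: "marginal J * cond_mean J = mass J"
  unfolding cond_mean_def using mass_eq_0_if_marginal_eq_0 by (cases "marginal J = 0") auto

lemma cond_mean_pos: "marginal J > 0 \<Longrightarrow> cond_mean J > 0"
  unfolding cond_mean_def using mass_pos_if_marginal_pos by auto

lemma ent_term_eq_0_if_marginal_eq_0: "marginal J = 0 \<Longrightarrow> ent_term J = 0"
  unfolding ent_term_def using mass_eq_0_if_marginal_eq_0 by simp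

lemma sum_mass_insert:
  "I \<subseteq> {..<n} \<Longrightarrow> (\<Sum>x\<in>{..<n} - I. mass (insert x I)) = real (r - card I) * mass I"
  using sum_supersets_insert[of I f] unfolding mass_def by simp

lemma sum_mass_insert_insert:
  assumes "I \<subseteq> {..<n}" "x \<in> {..<n} - I" "card I < r"
  shows "(\<Sum>y\<in>{..<n} - I - {x}. mass (insert y (insert x I))) = (real (r - card I) - 1) * mass (insert x I)"
proof -
  have "{..<n} - I - {x} = {..<n} - insert x I" by auto
  moreover have "card (insert x I) = Suc (card I)" using assms finite_subset[OF assms(1)] by auto
  ultimately show ?thesis
    using sum_mass_insert[of "insert x I"] assms by (simp add: of_nat_diff)
qed

lemma level_0: "J \<subseteq> {..<n} \<Longrightarrow> level 0 J = ent_term J"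
  unfolding level_def by (simp add: layer_0)

lemma level_eq_0_if_card_gt:
  assumes "I \<subseteq> {..<n}" "card I + j > r"
  shows "level j I = 0"
  unfolding level_def using assms
  by (intro sum.neutral ballI ent_term_eq_0_if_marginal_eq_0 marginal_eq_0_if_card_gt)
    (auto simp: layer_def dest: finite_subset)

lemma level_eq_0_if_marginal_eq_0:
  assumes "marginal I = 0"
  shows "level j I = 0"
  unfolding level_def
proof (intro sum.neutral ballI ent_term_eq_0_if_marginal_eq_0)
  fix J assume "J \<in> layer n j I"
  then have "marginal J \<le> marginal I" by (auto simp: layer_def intro: marginal_antimono)
  then show "marginal J = 0" using assms marginal_nonneg[of J] by simp
qed

lemma sum_level_insert:
  "I \<subseteq> {..<n} \<Longrightarrow> (\<Sum>x\<in>{..<n} - I. level j (insert x I)) = real (Suc j) * level (Suc j) I"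
  unfolding level_def by (rule sum_layer_insert)

lemma level_1_eq:
  assumes "I \<subseteq> {..<n}"
  shows "level 1 I = (\<Sum>x\<in>{..<n} - I. ent_term (insert x I))"
  using sum_level_insert[OF assms, of 0] assms by (simp add: level_0)

lemma level_2_eq:
  assumes "I \<subseteq> {..<n}"
  shows "2 * level 2 I = (\<Sum>x\<in>{..<n} - I. \<Sum>y\<in>{..<n} - I - {x}. ent_term (insert y (insert x I)))"
proof -
  have "level 1 (insert x I) = (\<Sum>y\<in>{..<n} - I - {x}. ent_term (insert y (insert x I)))"
    if "x \<in> {..<n} - I" for x
  proof -
    have "{..<n} - insert x I = {..<n} - I - {x}" by auto
    then show ?thesis using that assms level_1_eq[of "insert x I"] by simp
  qed
  then show ?thesis
    using sum_level_insert[OF assms, of 1] by (simp add: numeral_2_eq_2)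
qed

lemma sum_pairs_mass:
  assumes "I \<subseteq> {..<n}" "card I < r"
  shows "(\<Sum>x\<in>{..<n} - I. \<Sum>y\<in>{..<n} - I - {x}. mass (insert y (insert x I)) * c x)
    = (real (r - card I) - 1) * (\<Sum>x\<in>{..<n} - I. mass (insert x I) * c x)"
  using sum_mass_insert_insert[OF assms(1) _ assms(2)]
  by (simp add: sum_distrib_right[symmetric] sum_distrib_left mult.assoc)

lemma mass_ln_ratio_eq:
  assumes "I \<subseteq> J" "K \<subseteq> J" "L \<subseteq> J"
  shows "mass J * ln (mass J / (marginal J * cond_mean K * cond_mean L / cond_mean I ^ 2))
    = ent_term J - mass J * ln (cond_mean K) - mass J * ln (cond_mean L) + 2 * (mass J * ln (cond_mean I))"
proof (cases "marginal J > 0")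
  case True
  then have pos: "cond_mean J > 0" "cond_mean K > 0" "cond_mean L > 0" "cond_mean I > 0"
    using assms marginal_antimono cond_mean_pos by (metis order_less_le_trans)+
  have "mass J / (marginal J * cond_mean K * cond_mean L / cond_mean I ^ 2)
      = cond_mean J * cond_mean I ^ 2 / (cond_mean K * cond_mean L)"
    using True pos marginal_mult_cond_mean[of J] by (simp add: field_simps)
  then have "ln (mass J / (marginal J * cond_mean K * cond_mean L / cond_mean I ^ 2))
      = ln (cond_mean J) + 2 * ln (cond_mean I) - ln (cond_mean K) - ln (cond_mean L)"
    using pos by (simp add: ln_div ln_mult ln_realpow)
  then show ?thesis unfolding ent_term_def by (simp only: ring_distribs)
next
  case False
  then have "mass J = 0"
    using marginal_nonneg[of J] mass_eq_0_if_marginal_eq_0 by simp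
  then show ?thesis unfolding ent_term_def by simp
qed

lemma sum_pairs_mass_ln_ratio:
  assumes I: "I \<subseteq> {..<n}" and m: "card I + m = r" "m \<ge> 1"
  shows "(\<Sum>x\<in>{..<n} - I. \<Sum>y\<in>{..<n} - I - {x}. mass (insert y (insert x I))
      * ln (mass (insert y (insert x I))
        / (marginal (insert y (insert x I)) * cond_mean (insert x I) * cond_mean (insert y I) / cond_mean I ^ 2)))
    = 2 * level 2 I - 2 * (real m - 1) * level 1 I + 2 * (real m * (real m - 1) * level 0 I)"
proof -
  define R where "R = {..<n} - I"
  define M where "M x y = mass (insert y (insert x I))" for x y
  have finR: "finite R" unfolding R_def by simp
  have pairs_mass: "(\<Sum>x\<in>R. \<Sum>y\<in>R - {x}. M x y * c x) = (real m - 1) * (\<Sum>x\<in>R. mass (insert x I) * c x)"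
    for c
    using sum_pairs_mass[OF I, of c] m unfolding R_def M_def by (simp add: of_nat_diff)
  have level_1: "(\<Sum>x\<in>R. mass (insert x I) * ln (cond_mean (insert x I))) = level 1 I"
    unfolding level_1_eq[OF I] R_def ent_term_def ..
  have "(\<Sum>x\<in>R. \<Sum>y\<in>R - {x}. ent_term (insert y (insert x I))) = 2 * level 2 I"
    unfolding level_2_eq[OF I] R_def ..
  moreover have "(\<Sum>x\<in>R. \<Sum>y\<in>R - {x}. M x y * ln (cond_mean (insert x I))) = (real m - 1) * level 1 I"
    unfolding pairs_mass level_1 ..
  moreover have "(\<Sum>x\<in>R. \<Sum>y\<in>R - {x}. M x y * ln (cond_mean (insert y I))) = (real m - 1) * level 1 I"
    using pairs_mass level_1 finR
    by (subst sum_offdiag_swap) (simp_all add: M_def insert_commute)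
  moreover have "(\<Sum>x\<in>R. \<Sum>y\<in>R - {x}. M x y * ln (cond_mean I)) = real m * (real m - 1) * level 0 I"
    unfolding pairs_mass using sum_mass_insert[OF I] m
    by (simp add: R_def level_0[OF I] ent_term_def sum_distrib_right[symmetric])
  moreover have "(\<Sum>x\<in>R. \<Sum>y\<in>R - {x}. mass (insert y (insert x I))
      * ln (mass (insert y (insert x I))
        / (marginal (insert y (insert x I)) * cond_mean (insert x I) * cond_mean (insert y I) / cond_mean I ^ 2)))
    = (\<Sum>x\<in>R. \<Sum>y\<in>R - {x}. ent_term (insert y (insert x I)) - M x y * ln (cond_mean (insert x I))
      - M x y * ln (cond_mean (insert y I)) + 2 * (M x y * ln (cond_mean I)))"
    unfolding M_def by (intro sum.cong refl mass_ln_ratio_eq) auto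
  ultimately show ?thesis
    unfolding R_def[symmetric] by (simp add: sum_subtractf sum.distrib sum_distrib_left[symmetric])
qed

context
  assumes slc: "strongly_log_concave n (gen_poly n \<pi>)"
begin

lemma sum_pairs_marginal_cond_mean_le:
  assumes I: "I \<subseteq> {..<n}" and m: "card I + m = r" "m \<ge> 2" and pos: "marginal I > 0"
  shows "(\<Sum>x\<in>{..<n} - I. \<Sum>y\<in>{..<n} - I - {x}.
      marginal (insert y (insert x I)) * cond_mean (insert x I) * cond_mean (insert y I))
    \<le> real m * (real m - 1) * (marginal I * cond_mean I ^ 2)"
proof -
  have rm: "real (r - card I) = real m" using m by simp
  have "(\<Sum>x\<in>{..<n} - I. marginal (insert x I) * cond_mean (insert x I)) = real m * mass I"
    using sum_mass_insert[OF I] rm by (simp add: marginal_mult_cond_mean)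
  then have "(\<Sum>x\<in>{..<n} - I. \<Sum>y\<in>{..<n} - I - {x}.
      marginal (insert y (insert x I)) * cond_mean (insert x I) * cond_mean (insert y I))
    \<le> (real m - 1) / (real m * marginal I) * (real m * mass I)^2"
    using link_quadratic_form_le[OF slc I pos, of "\<lambda>x. cond_mean (insert x I)", unfolded rm] m by simp
  also have "\<dots> = real m * (real m - 1) * (marginal I * cond_mean I ^ 2)"
    unfolding marginal_mult_cond_mean[symmetric] using pos m by (simp add: field_simps power2_eq_square)
  finally show ?thesis .
qed

lemma local_entropy_contraction:
  assumes I: "I \<subseteq> {..<n}" and m: "card I + m = r" "m \<ge> 2" and pos: "marginal I > 0"
  shows "2 * (real m - 1) * level 1 I - real m * (real m - 1) * level 0 I \<le> 2 * level 2 I"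
proof -
  \<comment> \<open>Log-sum inequality over the pairs \<open>x \<noteq> y\<close> outside \<open>I\<close>, comparing \<open>mass (I+x+y)\<close> with the
    weights \<open>b\<close>, whose total the spectral bound keeps below \<open>m (m - 1) marginal I\<close>.\<close>
  define P where "P = Sigma ({..<n} - I) (\<lambda>x. {..<n} - I - {x})"
  define a where "a = (\<lambda>(x, y). mass (insert y (insert x I)))"
  define b where "b = (\<lambda>(x, y). marginal (insert y (insert x I))
    * cond_mean (insert x I) * cond_mean (insert y I) / cond_mean I ^ 2)"
  have pairs: "(\<Sum>p\<in>P. g p) = (\<Sum>x\<in>{..<n} - I. \<Sum>y\<in>{..<n} - I - {x}. g (x, y))" for g :: "_ \<Rightarrow> real"
    unfolding P_def by (simp add: sum.Sigma)
  have F_I: "cond_mean I > 0" using cond_mean_pos[OF pos] .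
  have rm: "real (r - card I) = real m" and cI: "card I < r" using m by auto
  have sum_a: "sum a P = real m * (real m - 1) * mass I"
    using sum_pairs_mass[OF I cI, of "\<lambda>_. 1"] sum_mass_insert[OF I]
    unfolding pairs a_def rm by simp
  have "sum b P = (\<Sum>x\<in>{..<n} - I. \<Sum>y\<in>{..<n} - I - {x}.
      marginal (insert y (insert x I)) * cond_mean (insert x I) * cond_mean (insert y I)) / cond_mean I ^ 2"
    unfolding pairs b_def by (simp add: sum_divide_distrib)
  also have "\<dots> \<le> real m * (real m - 1) * (marginal I * cond_mean I ^ 2) / cond_mean I ^ 2"
    by (rule divide_right_mono[OF sum_pairs_marginal_cond_mean_le[OF I m pos]]) simp
  finally have sum_b: "sum b P \<le> real m * (real m - 1) * marginal I"
    using F_I by simp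
  have "sum a P * ln (sum a P / (real m * (real m - 1) * marginal I)) \<le> (\<Sum>p\<in>P. a p * ln (a p / b p))"
  proof (rule log_sum_inequality[OF _ _ _ _ sum_b])
    fix p assume "a p > 0"
    moreover obtain x y where p: "p = (x, y)" by fastforce
    ultimately have "marginal (insert y (insert x I)) > 0"
      using marginal_nonneg mass_eq_0_if_marginal_eq_0 unfolding a_def
      by (metis case_prod_conv less_eq_real_def less_irrefl)
    moreover have "marginal (insert y (insert x I)) \<le> marginal (insert x I)"
      "marginal (insert y (insert x I)) \<le> marginal (insert y I)"
      by (auto intro: marginal_antimono)
    ultimately show "b p > 0"
      unfolding b_def p using F_I by (simp add: cond_mean_pos)
  qed (use m pos in \<open>auto simp: P_def a_def b_def mass_nonneg marginal_nonneg cond_mean_def split: prod.splits\<close>)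
  moreover have "sum a P * ln (sum a P / (real m * (real m - 1) * marginal I)) = real m * (real m - 1) * level 0 I"
    using m unfolding sum_a level_0[OF I] ent_term_def cond_mean_def by simp
  moreover have "(\<Sum>p\<in>P. a p * ln (a p / b p))
      = 2 * level 2 I - 2 * (real m - 1) * level 1 I + 2 * (real m * (real m - 1) * level 0 I)"
    using sum_pairs_mass_ln_ratio[OF I m(1)] m unfolding pairs a_def b_def by simp
  ultimately show ?thesis by linarith
qed

lemma level_2_lower_bound:
  assumes I: "I \<subseteq> {..<n}" and m: "card I + m = r" "m \<ge> 1"
  shows "2 * (real m - 1) * level 1 I - real m * (real m - 1) * level 0 I \<le> 2 * level 2 I"
proof (cases "m = 1 \<or> marginal I = 0")
  case True
  then show ?thesis
    using level_eq_0_if_card_gt[OF I, of 2] level_eq_0_if_marginal_eq_0 m by auto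
next
  case False
  then show ?thesis
    using local_entropy_contraction[OF I m(1)] m marginal_nonneg[of I] by simp
qed

lemma top_level_lower_bound:
  "I \<subseteq> {..<n} \<Longrightarrow> card I + m = r \<Longrightarrow> level 1 I - (real m - 1) * level 0 I \<le> level m I"
proof (induction m arbitrary: I)
  case 0
  then show ?case using level_eq_0_if_card_gt[of I 1] by simp
next
  case (Suc m)
  note I = Suc.prems(1)
  have "(\<Sum>x\<in>{..<n} - I. level 1 (insert x I) - (real m - 1) * level 0 (insert x I))
      \<le> (\<Sum>x\<in>{..<n} - I. level m (insert x I))"
    using Suc.IH Suc.prems finite_subset[OF I] by (intro sum_mono) auto
  then have "2 * level 2 I - (real m - 1) * level 1 I \<le> real (Suc m) * level (Suc m) I"
    using sum_level_insert[OF I, of 0] sum_level_insert[OF I, of 1] sum_level_insert[OF I, of m]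
    by (simp add: sum_subtractf sum_distrib_left[symmetric] numeral_2_eq_2)
  moreover have "2 * real m * level 1 I - (real m + 1) * real m * level 0 I \<le> 2 * level 2 I"
    using level_2_lower_bound[OF I Suc.prems(2)] by (simp add: algebra_simps)
  ultimately have "real (Suc m) * (level 1 I - real m * level 0 I) \<le> real (Suc m) * level (Suc m) I"
    by (simp add: algebra_simps)
  then show ?case by (simp add: mult_le_cancel_left_pos)
qed

lemma penultimate_level_upper_bound:
  "I \<subseteq> {..<n} \<Longrightarrow> card I + Suc m = r \<Longrightarrow> level m I \<le> real m * level (Suc m) I + level 0 I"
proof (induction m arbitrary: I)
  case 0
  then show ?case by simp
next
  case (Suc m)
  note I = Suc.prems(1)
  have "(\<Sum>x\<in>{..<n} - I. level m (insert x I))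
      \<le> (\<Sum>x\<in>{..<n} - I. real m * level (Suc m) (insert x I) + level 0 (insert x I))"
    using Suc.IH Suc.prems finite_subset[OF I] by (intro sum_mono) auto
  then have "real (Suc m) * level (Suc m) I \<le> real m * (real (Suc (Suc m)) * level (Suc (Suc m)) I) + level 1 I"
    using sum_level_insert[OF I, of 0] sum_level_insert[OF I, of m] sum_level_insert[OF I, of "Suc m"]
    by (simp add: sum.distrib sum_distrib_left[symmetric])
  moreover have "level 1 I - real (Suc m) * level 0 I \<le> level (Suc (Suc m)) I"
    using top_level_lower_bound[OF I Suc.prems(2)] by simp
  ultimately have "real (Suc m) * level (Suc m) I
      \<le> real (Suc m) * (real (Suc m) * level (Suc (Suc m)) I + level 0 I)"
    by (simp add: algebra_simps)
  then show ?case by (simp add: mult_le_cancel_left_pos)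
qed

end

end

section \<open>The bases-exchange walk\<close>

context test_function
begin

lemma bx_walk_eq:
  assumes x: "x \<in> support \<pi>" and y: "y \<in> support \<pi>"
  shows "bx_walk \<pi> x y = (\<Sum>i\<in>x. if x - {i} \<subseteq> y then \<pi> y / marginal (x - {i}) else 0) / real r"
proof -
  have Z: "(\<Sum>C\<in>{C\<in>support \<pi>. x - {i} \<subseteq> C}. \<pi> C) = marginal (x - {i})" for i
    using sum_support_supersets[where J="x - {i}" and g="\<lambda>_. 1"] unfolding marginal_def by simp
  show ?thesis unfolding bx_walk_def card_support[OF x] Z using y by simp
qed

lemma sum_ln_le_ln_cond_mean:
  assumes pos: "marginal T > 0"
  shows "(\<Sum>y\<in>{y\<in>support \<pi>. T \<subseteq> y}. \<pi> y * ln (f y)) \<le> marginal T * ln (cond_mean T)"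
proof -
  define Y where "Y = {y\<in>support \<pi>. T \<subseteq> y}"
  have \<pi>f: "\<pi> y > 0" "f y > 0" if "y \<in> Y" for y
    using that f_pos unfolding Y_def support_def by auto
  have "sum \<pi> Y = marginal T" "(\<Sum>y\<in>Y. \<pi> y * f y) = mass T"
    using sum_support_supersets[where J=T and g="\<lambda>_. 1"] sum_support_supersets[where J=T and g=f]
    unfolding Y_def marginal_def mass_def by simp_all
  moreover have "sum \<pi> Y * ln (sum \<pi> Y / mass T) \<le> (\<Sum>y\<in>Y. \<pi> y * ln (\<pi> y / (\<pi> y * f y)))"
    by (rule log_sum_inequality[of Y \<pi> "\<lambda>y. \<pi> y * f y" "mass T"])
      (use \<pi>f \<open>(\<Sum>y\<in>Y. \<pi> y * f y) = mass T\<close> mass_pos_if_marginal_pos[OF pos]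
        in \<open>auto simp: Y_def less_imp_le\<close>)
  ultimately have "marginal T * ln (marginal T / mass T) \<le> (\<Sum>y\<in>Y. \<pi> y * ln (\<pi> y / (\<pi> y * f y)))"
    by simp
  also have "\<dots> = - (\<Sum>y\<in>Y. \<pi> y * ln (f y))"
    unfolding sum_negf[symmetric]
    by (intro sum.cong refl) (use \<pi>f in \<open>simp add: ln_div\<close>)
  finally show ?thesis
    using pos mass_pos_if_marginal_pos[OF pos] unfolding Y_def cond_mean_def
    by (simp add: ln_div algebra_simps)
qed

lemma sum_bx_walk_ln_le:
  assumes x: "x \<in> support \<pi>"
  shows "(\<Sum>y\<in>support \<pi>. bx_walk \<pi> x y * ln (f y)) \<le> (\<Sum>i\<in>x. ln (cond_mean (x - {i}))) / real r"
proof -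
  have pos: "marginal (x - {i}) > 0" for i
    using x by (rule marginal_pos_if_support) auto
  have "bx_walk \<pi> x y * ln (f y)
      = (\<Sum>i\<in>x. if x - {i} \<subseteq> y then \<pi> y * ln (f y) / marginal (x - {i}) else 0) / real r"
    if y: "y \<in> support \<pi>" for y
  proof -
    have "bx_walk \<pi> x y * ln (f y)
        = (\<Sum>i\<in>x. (if x - {i} \<subseteq> y then \<pi> y / marginal (x - {i}) else 0) * ln (f y)) / real r"
      unfolding bx_walk_eq[OF x y] by (simp add: sum_distrib_right)
    also have "\<dots> = (\<Sum>i\<in>x. if x - {i} \<subseteq> y then \<pi> y * ln (f y) / marginal (x - {i}) else 0) / real r"
      by (intro arg_cong[where f="\<lambda>t. t / real r"] sum.cong) auto
    finally show ?thesis .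
  qed
  then have "(\<Sum>y\<in>support \<pi>. bx_walk \<pi> x y * ln (f y))
      = (\<Sum>y\<in>support \<pi>. \<Sum>i\<in>x. if x - {i} \<subseteq> y then \<pi> y * ln (f y) / marginal (x - {i}) else 0) / real r"
    by (simp add: sum_divide_distrib)
  also have "\<dots> = (\<Sum>i\<in>x. (\<Sum>y\<in>{y\<in>support \<pi>. x - {i} \<subseteq> y}. \<pi> y * ln (f y)) / marginal (x - {i})) / real r"
    by (subst sum.swap) (simp add: sum.inter_filter[symmetric] sum_divide_distrib)
  also have "\<dots> \<le> (\<Sum>i\<in>x. ln (cond_mean (x - {i}))) / real r"
    using sum_ln_le_ln_cond_mean[OF pos] pos
    by (intro divide_right_mono sum_mono) (simp_all add: divide_le_eq mult.commute)
  finally show ?thesis .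
qed

lemma level_facets_eq:
  assumes "r \<ge> 1"
  shows "level (r - 1) {} = (\<Sum>S\<in>support \<pi>. \<Sum>i\<in>S. \<pi> S * f S * ln (cond_mean (S - {i})))"
proof -
  have "level (r - 1) {} = (\<Sum>T\<in>layer n (r - 1) {}. \<Sum>S\<in>{S\<in>Pow {..<n}. T \<subseteq> S}. \<pi> S * f S * ln (cond_mean T))"
    unfolding level_def ent_term_def mass_def supersets_def by (simp add: sum_distrib_right)
  also have "\<dots> = (\<Sum>S\<in>Pow {..<n}. \<Sum>T\<in>{T\<in>layer n (r - 1) {}. T \<subseteq> S}. \<pi> S * f S * ln (cond_mean T))"
    by (rule sum.swap_restrict) auto
  also have "\<dots> = (\<Sum>S\<in>support \<pi>. \<Sum>T\<in>{T\<in>layer n (r - 1) {}. T \<subseteq> S}. \<pi> S * f S * ln (cond_mean T))"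
    by (rule sum.mono_neutral_right)
      (auto simp: support_subset support_def pi_pos_iff dest: subset_if_pi_nonzero)
  also have "\<dots> = (\<Sum>S\<in>support \<pi>. \<Sum>i\<in>S. \<pi> S * f S * ln (cond_mean (S - {i})))"
  proof (rule sum.cong[OF refl])
    fix S assume S: "S \<in> support \<pi>"
    then have "S \<subseteq> {..<n}" "card S = r"
      using support_subset card_support by auto
    moreover have "S \<noteq> {}" using \<open>card S = r\<close> assms by auto
    ultimately have
      "{T\<in>layer n (r - 1) {}. T \<subseteq> S} = (\<lambda>i. S - {i}) ` S"
      using layer_facets by metis
    moreover have "inj_on (\<lambda>i. S - {i}) S" unfolding inj_on_def by blast
    ultimately show "(\<Sum>T\<in>{T\<in>layer n (r - 1) {}. T \<subseteq> S}. \<pi> S * f S * ln (cond_mean T))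
        = (\<Sum>i\<in>S. \<pi> S * f S * ln (cond_mean (S - {i})))"
      by (simp add: sum.reindex)
  qed
  finally show ?thesis .
qed

lemma sum_bx_walk_le_level:
  assumes "r \<ge> 1"
  shows "(\<Sum>x\<in>support \<pi>. \<Sum>y\<in>support \<pi>. \<pi> x * f x * bx_walk \<pi> x y * ln (f y)) \<le> level (r - 1) {} / real r"
proof -
  have "(\<Sum>x\<in>support \<pi>. \<Sum>y\<in>support \<pi>. \<pi> x * f x * bx_walk \<pi> x y * ln (f y))
      = (\<Sum>x\<in>support \<pi>. \<pi> x * f x * (\<Sum>y\<in>support \<pi>. bx_walk \<pi> x y * ln (f y)))"
    by (simp add: sum_distrib_left mult.assoc)
  also have "\<dots> \<le> (\<Sum>x\<in>support \<pi>. \<pi> x * f x * ((\<Sum>i\<in>x. ln (cond_mean (x - {i}))) / real r))"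
    using sum_bx_walk_ln_le pi_mult_f_nonneg by (intro sum_mono mult_left_mono) auto
  also have "\<dots> = level (r - 1) {} / real r"
    unfolding level_facets_eq[OF assms] by (simp add: sum_divide_distrib sum_distrib_left)
  finally show ?thesis .
qed

lemma level_top_eq: "level r {} = (\<Sum>S\<in>support \<pi>. \<pi> S * (f S * ln (f S)))"
proof -
  have "ent_term J = \<pi> J * (f J * ln (f J))" if J: "J \<in> layer n r {}" for J
  proof -
    have "S = J" if "S \<in> supersets J" "\<pi> S \<noteq> 0" for S
      using that J card_if_pi_nonzero[OF that(2)] subset_if_pi_nonzero[OF that(2)]
        card_subset_eq[of S J] finite_subset[of S "{..<n}"]
      by (auto simp: layer_def supersets_def)
    then have sum_J: "(\<Sum>S\<in>supersets J. \<pi> S * g S) = (\<Sum>S\<in>{J}. \<pi> S * g S)" for g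
      using J by (intro sum.mono_neutral_right) (auto simp: supersets_def layer_def)
    have "marginal J = \<pi> J" "mass J = \<pi> J * f J"
      using sum_J[of "\<lambda>_. 1"] sum_J[of f] unfolding marginal_def mass_def by simp_all
    then show ?thesis unfolding ent_term_def cond_mean_def by (cases "\<pi> J = 0") simp_all
  qed
  then have "level r {} = (\<Sum>J\<in>layer n r {}. \<pi> J * (f J * ln (f J)))"
    unfolding level_def by simp
  also have "\<dots> = (\<Sum>S\<in>support \<pi>. \<pi> S * (f S * ln (f S)))"
    by (rule sum.mono_neutral_right)
      (auto simp: layer_def card_support support_def pi_pos_iff dest: subset_if_pi_nonzero)
  finally show ?thesis .
qed

lemma sum_support_mass: "(\<Sum>S\<in>support \<pi>. \<pi> S * f S) = mass {}"
  using sum_support_supersets[where J="{}" and g=f] unfolding mass_def by simp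

lemma entropy_eq_levels: "entropy (support \<pi>) \<pi> f = level r {} - level 0 {}"
  unfolding entropy_def level_top_eq sum_support_mass level_0[OF empty_subsetI]
  by (simp add: ent_term_def cond_mean_def marginal_empty)

lemma entropy_nonneg: "entropy (support \<pi>) \<pi> f \<ge> 0"
proof -
  have pos: "\<pi> S > 0" "f S > 0" if "S \<in> support \<pi>" for S
    using that f_pos by (auto simp: support_def)
  have "sum \<pi> (support \<pi>) = 1"
    using sum_support_supersets[where J="{}" and g="\<lambda>_. 1"] marginal_empty
    unfolding marginal_def by simp
  then have "mass {} * ln (mass {} / 1)
      \<le> (\<Sum>S\<in>support \<pi>. \<pi> S * f S * ln (\<pi> S * f S / \<pi> S))"
    using log_sum_inequality[of "support \<pi>" "\<lambda>S. \<pi> S * f S" \<pi> 1] pos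
    unfolding sum_support_mass by (simp add: less_imp_le)
  also have "\<dots> = (\<Sum>S\<in>support \<pi>. \<pi> S * (f S * ln (f S)))"
    using pos by (intro sum.cong) auto
  finally show ?thesis unfolding entropy_def sum_support_mass by simp
qed

lemma dirichlet_form_eq:
  "dirichlet_form (support \<pi>) \<pi> (bx_walk \<pi>) f (\<lambda>x. ln (f x))
    = level r {} - (\<Sum>x\<in>support \<pi>. \<Sum>y\<in>support \<pi>. \<pi> x * f x * bx_walk \<pi> x y * ln (f y))"
proof -
  have "\<pi> x * f x * ((if x = y then 1 else 0) - bx_walk \<pi> x y) * ln (f y)
      = (if x = y then \<pi> x * (f x * ln (f x)) else 0) - \<pi> x * f x * bx_walk \<pi> x y * ln (f y)" for x y
    by (simp add: algebra_simps)
  then show ?thesis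
    unfolding dirichlet_form_def level_top_eq by (simp add: sum_subtractf)
qed

lemma entropy_le_dirichlet_form:
  assumes slc: "strongly_log_concave n (gen_poly n \<pi>)" and r: "r \<ge> 1"
  shows "entropy (support \<pi>) \<pi> f \<le> real r * dirichlet_form (support \<pi>) \<pi> (bx_walk \<pi>) f (\<lambda>x. ln (f x))"
proof -
  have "level (r - 1) {} \<le> (real r - 1) * level r {} + level 0 {}"
    using penultimate_level_upper_bound[OF slc, of "{}" "r - 1"] r by (simp add: of_nat_diff)
  then have "level r {} - level 0 {} \<le> real r * (level r {} - level (r - 1) {} / real r)"
    using r by (simp add: algebra_simps)
  also have "\<dots> \<le> real r * dirichlet_form (support \<pi>) \<pi> (bx_walk \<pi>) f (\<lambda>x. ln (f x))"
    unfolding dirichlet_form_eq using sum_bx_walk_le_level[OF r] by (intro mult_left_mono) auto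
  finally show ?thesis unfolding entropy_eq_levels .
qed

end

theorem theorem1p1:
  fixes n r :: nat and \<pi> :: "nat set \<Rightarrow> real"
  assumes "r \<ge> 2"
    and "is_distribution n \<pi>"
    and "homogeneous r \<pi>"
    and "strongly_log_concave n (gen_poly n \<pi>)"
  shows "mlsi_const (support \<pi>) \<pi> (bx_walk \<pi>) \<ge> ereal (1 / real r)"
  unfolding mlsi_const_def
proof (rule INF_greatest, clarsimp)
  fix f assume f: "\<forall>x\<in>support \<pi>. f x > 0" "entropy (support \<pi>) \<pi> f \<noteq> 0"
  interpret test_function n r \<pi> f
    using assms(2,3) f(1) by unfold_locales (auto simp: support_def)
  have "entropy (support \<pi>) \<pi> f > 0"
    using entropy_nonneg f(2) by simp
  moreover have "entropy (support \<pi>) \<pi> f \<le> real r * dirichlet_form (support \<pi>) \<pi> (bx_walk \<pi>) f (\<lambda>x. ln (f x))"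
    using entropy_le_dirichlet_form assms(1,4) by simp
  ultimately show "1 / real r \<le> dirichlet_form (support \<pi>) \<pi> (bx_walk \<pi>) f (\<lambda>x. ln (f x)) / entropy (support \<pi>) \<pi> f"
    using assms(1) by (simp add: field_simps)
qed

end
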